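(* Let $gl_n(\mathbb{C})$ be the Lie algebra of all $n\times n$ complex matrices with bracket $[x,y]=xy-yx$. A map $f:gl_n(\mathbb{C})\times gl_n(\mathbb{C})\to gl_n(\mathbb{C})$ is a biderivation of $gl_n(\mathbb{C})$ if and only if there are complex numbers $\lambda,\mu$ such that $f(x,y)=\mu\,\mathrm{tr}(x)\,\mathrm{tr}(y)\,I_n+\lambda[x,y]$ for all $x,y\in gl_n(\mathbb{C})$.
   Context: A biderivation of a Lie algebra $L$ is a bilinear map $f:L\times L\to L$ such that $f([x,y],z)=[x,f(y,z)]+[f(x,z),y]$ and $f(x,[y,z])=[f(x,y),z]+[y,f(x,z)]$ for all $x,y,z\in L$. $I_n$ is the identity matrix and $\mathrm{tr}$ the trace. *)

theory Defs
  imports "HOL-Analysis.Analysis"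
begin

text \<open>gl_n(C) is modelled as the type complex^'n^'n for an arbitrary finite index type 'n
  (so n = CARD('n) >= 1 arbitrary).\<close>

definition cscale :: "complex \<Rightarrow> complex^'n^'n \<Rightarrow> complex^'n^'n" where
  "cscale c A = (\<chi> i j. c * A $ i $ j)"

definition lie_bracket :: "complex^'n^'n \<Rightarrow> complex^'n^'n \<Rightarrow> complex^'n^'n" where
  "lie_bracket x y = x ** y - y ** x"

definition cbilinear :: "(complex^'n^'n \<Rightarrow> complex^'n^'n \<Rightarrow> complex^'n^'n) \<Rightarrow> bool" where
  "cbilinear f \<longleftrightarrow>
     (\<forall>x y z. f (x + y) z = f x z + f y z) \<and>
     (\<forall>x y z. f x (y + z) = f x y + f x z) \<and>
     (\<forall>c x y. f (cscale c x) y = cscale c (f x y)) \<and>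
     (\<forall>c x y. f x (cscale c y) = cscale c (f x y))"

definition biderivation :: "(complex^'n^'n \<Rightarrow> complex^'n^'n \<Rightarrow> complex^'n^'n) \<Rightarrow> bool" where
  "biderivation f \<longleftrightarrow> cbilinear f \<and>
     (\<forall>x y z. f (lie_bracket x y) z = lie_bracket x (f y z) + lie_bracket (f x z) y) \<and>
     (\<forall>x y z. f x (lie_bracket y z) = lie_bracket (f x y) z + lie_bracket y (f x z))"

end

theory Submission
  imports Defs
begin

(* Fixing either argument of a biderivation f gives a derivation of gl_n, and every derivation
   of gl_n is an inner derivation plus a multiple of tr(x) I. Hence
   f(x,y) = [B x, y] + d(x) tr(y) I = [A y, x] + c(y) tr(x) I, and taking traces forces
   d(x) = mu tr(x) and [B x, y] = [A y, x]. Since the trace form is nondegenerate and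
   tr([x, B x] y) = tr([A y, x] x) = 0, B is a commuting map: [B x, x] = 0. Polarising gives
   [B x, y] = -[B y, x], and evaluating this on matrix units shows that B E_ab is lambda E_ab
   up to a scalar matrix, with lambda independent of a and b; so [B x, y] = lambda [x, y]. *)

lemma cscale_nth [simp]: "cscale c A $ i $ j = c * A $ i $ j"
  by (simp add: cscale_def)

lemma cscale_add_right: "cscale c (A + B) = cscale c A + cscale c B"
  by (simp add: vec_eq_iff distrib_left)

lemma cscale_diff_right: "cscale c (A - B) = cscale c A - cscale c B"
  by (simp add: vec_eq_iff right_diff_distrib)

lemma cscale_add_left: "cscale (c + d) A = cscale c A + cscale d A"
  by (simp add: vec_eq_iff distrib_right)

lemma cscale_cscale: "cscale c (cscale d A) = cscale (c * d) A"
  by (simp add: vec_eq_iff mult.assoc)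

lemma cscale_0_left [simp]: "cscale 0 A = 0"
  by (simp add: vec_eq_iff)

lemma cscale_0_right [simp]: "cscale c 0 = 0"
  by (simp add: vec_eq_iff)

lemma matrix_add_rdistrib: "((A::complex^'n^'n) + B) ** C = A ** C + B ** C"
  by (simp add: vec_eq_iff matrix_matrix_mult_def sum.distrib distrib_right)

lemma matrix_sub_ldistrib: "(C::complex^'n^'n) ** (A - B) = C ** A - C ** B"
  by (simp add: vec_eq_iff matrix_matrix_mult_def sum_subtractf right_diff_distrib)

lemma matrix_sub_rdistrib: "((A::complex^'n^'n) - B) ** C = A ** C - B ** C"
  by (simp add: vec_eq_iff matrix_matrix_mult_def sum_subtractf left_diff_distrib)

lemma matrix_mul_cscale_left: "cscale c (A::complex^'n^'n) ** B = cscale c (A ** B)"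
  by (simp add: vec_eq_iff matrix_matrix_mult_def sum_distrib_left mult.assoc)

lemma matrix_mul_cscale_right: "(A::complex^'n^'n) ** cscale c B = cscale c (A ** B)"
  by (simp add: vec_eq_iff matrix_matrix_mult_def sum_distrib_left mult_ac)

lemma trace_cscale: "trace (cscale c A) = c * trace A"
  by (simp add: trace_def sum_distrib_left)

lemma lie_bracket_add_left: "lie_bracket (A + B) C = lie_bracket A C + lie_bracket B C"
  by (simp add: lie_bracket_def matrix_add_ldistrib matrix_add_rdistrib)

lemma lie_bracket_add_right: "lie_bracket C (A + B) = lie_bracket C A + lie_bracket C B"
  by (simp add: lie_bracket_def matrix_add_ldistrib matrix_add_rdistrib)

lemma lie_bracket_diff_left: "lie_bracket (A - B) C = lie_bracket A C - lie_bracket B C"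
  by (simp add: lie_bracket_def matrix_sub_ldistrib matrix_sub_rdistrib)

lemma lie_bracket_diff_right: "lie_bracket C (A - B) = lie_bracket C A - lie_bracket C B"
  by (simp add: lie_bracket_def matrix_sub_ldistrib matrix_sub_rdistrib)

lemma lie_bracket_cscale_left: "lie_bracket (cscale c A) B = cscale c (lie_bracket A B)"
  by (simp add: lie_bracket_def matrix_mul_cscale_left matrix_mul_cscale_right cscale_diff_right)

lemma lie_bracket_cscale_right: "lie_bracket A (cscale c B) = cscale c (lie_bracket A B)"
  by (simp add: lie_bracket_def matrix_mul_cscale_left matrix_mul_cscale_right cscale_diff_right)

lemma lie_bracket_antisym: "lie_bracket A B = - lie_bracket B A"
  by (simp add: lie_bracket_def)

lemma lie_bracket_uminus_left: "lie_bracket (- A) B = - lie_bracket A B"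
  by (simp add: lie_bracket_def vec_eq_iff matrix_matrix_mult_def sum_negf)

lemma lie_bracket_0_left [simp]: "lie_bracket 0 A = 0"
  by (simp add: lie_bracket_def)

lemma lie_bracket_0_right [simp]: "lie_bracket A 0 = 0"
  by (simp add: lie_bracket_def)

lemma lie_bracket_mat_1_left [simp]: "lie_bracket (mat 1) A = 0"
  by (simp add: lie_bracket_def)

lemma lie_bracket_mat_1_right [simp]: "lie_bracket A (mat 1) = 0"
  by (simp add: lie_bracket_def)

lemma lie_bracket_jacobi_left:
  "lie_bracket (lie_bracket x y) z = lie_bracket x (lie_bracket y z) + lie_bracket (lie_bracket x z) y"
  by (simp add: lie_bracket_def matrix_sub_ldistrib matrix_sub_rdistrib matrix_mul_assoc)

lemma lie_bracket_jacobi_right: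
  "lie_bracket x (lie_bracket y z) = lie_bracket (lie_bracket x y) z + lie_bracket y (lie_bracket x z)"
  by (simp add: lie_bracket_def matrix_sub_ldistrib matrix_sub_rdistrib matrix_mul_assoc)

lemma trace_lie_bracket [simp]: "trace (lie_bracket x y) = 0"
  using trace_mul_sym[of x y] by (simp add: lie_bracket_def trace_sub)

lemma lie_bracket_eq_0_if_subsingleton:
  assumes "\<And>p q::'n. p = q"
  shows "lie_bracket (x::complex^'n^'n) y = 0"
proof -
  obtain t :: 'n where univ: "UNIV = {t}"
    using assms by (metis UNIV_eq_I singletonI)
  show ?thesis
    by (simp add: lie_bracket_def vec_eq_iff matrix_matrix_mult_def univ) (metis assms mult.commute)
qed

definition matrix_unit :: "'n::finite \<Rightarrow> 'n \<Rightarrow> complex^'n^'n" where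
  "matrix_unit a b = (\<chi> p q. if p = a \<and> q = b then 1 else 0)"

lemma matrix_unit_nth [simp]: "matrix_unit a b $ p $ q = (if p = a \<and> q = b then 1 else 0)"
  by (simp add: matrix_unit_def)

lemma matrix_mul_matrix_unit_right [simp]:
  "(M ** matrix_unit a b) $ p $ q = (if q = b then M $ p $ a else 0)"
  by (simp add: matrix_matrix_mult_def if_distrib cong: if_cong)

lemma matrix_mul_matrix_unit_left [simp]:
  "(matrix_unit a b ** M) $ p $ q = (if p = a then M $ b $ q else 0)"
  by (simp add: matrix_matrix_mult_def if_distrib if_distribR cong: if_cong)

lemma lie_bracket_nth: "lie_bracket x y $ p $ q = (x ** y) $ p $ q - (y ** x) $ p $ q"
  by (simp add: lie_bracket_def)

lemma trace_matrix_unit: "trace (matrix_unit a b) = (if a = b then 1 else 0)"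
  by (auto simp: trace_def intro!: sum.neutral)

lemma trace_mul_matrix_unit: "trace (M ** matrix_unit q p) = M $ p $ q"
  by (simp add: trace_def)

lemma matrix_unit_expansion:
  "x = (\<Sum>a\<in>UNIV. \<Sum>b\<in>UNIV. cscale (x $ a $ b) (matrix_unit a b))"
proof -
  have "(\<Sum>b\<in>UNIV. x $ a $ b * (if p = a \<and> q = b then 1 else 0)) = (if p = a then x $ a $ q else 0)"
    for a p q
    by (cases "p = a") (simp_all add: if_distrib cong: if_cong)
  then show ?thesis
    by (simp add: vec_eq_iff sum_component)
qed

definition gl_linear :: "(complex^'n^'n \<Rightarrow> complex^'n^'n) \<Rightarrow> bool" where
  "gl_linear L \<longleftrightarrow> (\<forall>x y. L (x + y) = L x + L y) \<and> (\<forall>c x. L (cscale c x) = cscale c (L x))"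

lemma gl_linear_add: "gl_linear L \<Longrightarrow> L (x + y) = L x + L y"
  by (simp add: gl_linear_def)

lemma gl_linear_cscale: "gl_linear L \<Longrightarrow> L (cscale c x) = cscale c (L x)"
  by (simp add: gl_linear_def)

lemma gl_linear_0: "gl_linear L \<Longrightarrow> L 0 = 0"
  using gl_linear_add[of L 0 0] by simp

lemma gl_linear_diff: "gl_linear L \<Longrightarrow> L (x - y) = L x - L y"
  using gl_linear_add[of L "x - y" y] by (simp add: algebra_simps)

lemma gl_linear_sum:
  assumes "gl_linear L" "finite S"
  shows "L (sum g S) = (\<Sum>i\<in>S. L (g i))"
  using assms(2) by (induction S rule: finite_induct) (simp_all add: assms(1) gl_linear_0 gl_linear_add)

lemma gl_linear_matrix_unit_expansion:
  assumes "gl_linear L"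
  shows "L x = (\<Sum>a\<in>UNIV. \<Sum>b\<in>UNIV. cscale (x $ a $ b) (L (matrix_unit a b)))"
proof -
  have "L (\<Sum>a\<in>UNIV. \<Sum>b\<in>UNIV. cscale (x $ a $ b) (matrix_unit a b))
      = (\<Sum>a\<in>UNIV. \<Sum>b\<in>UNIV. cscale (x $ a $ b) (L (matrix_unit a b)))"
    using assms by (simp add: gl_linear_sum gl_linear_cscale)
  then show ?thesis
    by (simp only: matrix_unit_expansion[symmetric])
qed

lemma gl_linear_eqI_matrix_unit:
  assumes "gl_linear L1" "gl_linear L2" "\<And>a b. L1 (matrix_unit a b) = L2 (matrix_unit a b)"
  shows "L1 x = L2 x"
  by (simp only: gl_linear_matrix_unit_expansion[OF assms(1), of x]
      gl_linear_matrix_unit_expansion[OF assms(2), of x] assms(3))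

lemma gl_linear_eq_0I_matrix_unit:
  assumes "gl_linear L" "\<And>a b. L (matrix_unit a b) = 0"
  shows "L x = 0"
proof -
  have "gl_linear (\<lambda>_. 0)"
    by (simp add: gl_linear_def)
  then show ?thesis
    using gl_linear_eqI_matrix_unit[OF assms(1), of "\<lambda>_. 0" x] assms(2) by simp
qed

definition gl_derivation :: "(complex^'n^'n \<Rightarrow> complex^'n^'n) \<Rightarrow> bool" where
  "gl_derivation D \<longleftrightarrow> gl_linear D \<and>
     (\<forall>x y. D (lie_bracket x y) = lie_bracket x (D y) + lie_bracket (D x) y)"

context
  fixes N :: "complex^'n^'n \<Rightarrow> complex^'n^'n" and r :: 'n
  assumes derivation: "gl_derivation N"
    and column_vanishes: "\<And>a p. N (matrix_unit a r) $ p $ r = 0"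
begin

private lemma linear: "gl_linear N"
  using derivation by (simp add: gl_derivation_def)

private lemma leibniz: "N (lie_bracket x y) = lie_bracket x (N y) + lie_bracket (N x) y"
  using derivation by (simp add: gl_derivation_def)

private lemma vanishes_diagonal_unit: "N (matrix_unit r r) = 0"
proof -
  have "N (matrix_unit r r) $ p $ q = 0" for p q
  proof (cases "q = r")
    case True
    then show ?thesis using column_vanishes by simp
  next
    case False
    have "lie_bracket (matrix_unit q r) (matrix_unit r r) = matrix_unit q r"
      using False by (simp add: vec_eq_iff lie_bracket_nth)
    then have "N (matrix_unit q r) $ p $ r = (lie_bracket (matrix_unit q r) (N (matrix_unit r r))
        + lie_bracket (N (matrix_unit q r)) (matrix_unit r r)) $ p $ r"
      using leibniz[of "matrix_unit q r" "matrix_unit r r"] by simp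
    then show ?thesis
      using column_vanishes[of q p] column_vanishes[of r r] column_vanishes[of q r]
      by (auto simp: lie_bracket_nth split: if_splits)
  qed
  then show ?thesis by (simp add: vec_eq_iff)
qed

private lemma vanishes_column_unit: "N (matrix_unit a r) = 0"
proof (cases "a = r")
  case True
  then show ?thesis using vanishes_diagonal_unit by simp
next
  case False
  have "lie_bracket (matrix_unit a r) (matrix_unit r r) = matrix_unit a r"
    using False by (simp add: vec_eq_iff lie_bracket_nth)
  then have eq: "N (matrix_unit a r) = lie_bracket (N (matrix_unit a r)) (matrix_unit r r)"
    using leibniz[of "matrix_unit a r" "matrix_unit r r"] vanishes_diagonal_unit by simp
  have "N (matrix_unit a r) $ p $ q = 0" for p q
    using arg_cong[OF eq, of "\<lambda>M. M $ p $ q"] arg_cong[OF eq, of "\<lambda>M. M $ r $ q"]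
      column_vanishes[of a p] column_vanishes[of a r]
    by (auto simp: lie_bracket_nth split: if_splits)
  then show ?thesis by (simp add: vec_eq_iff)
qed

private lemma unit_bracket_image:
  assumes "a \<noteq> r"
  shows "N (lie_bracket (matrix_unit r b) (matrix_unit a r)) = - N (matrix_unit a b)"
proof -
  have "lie_bracket (matrix_unit r b) (matrix_unit a r)
      = (if b = a then matrix_unit r r else 0) - matrix_unit a b" (is "_ = ?rhs")
    using assms by (auto simp: vec_eq_iff lie_bracket_nth)
  moreover have "N ?rhs = - N (matrix_unit a b)"
    unfolding gl_linear_diff[OF linear] using gl_linear_0[OF linear] vanishes_diagonal_unit by simp
  ultimately show ?thesis by simp
qed

private lemma vanishes_row_unit: "N (matrix_unit r b) = 0"
proof (cases "b = r")
  case True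
  then show ?thesis using vanishes_diagonal_unit by simp
next
  case False
  define X where "X = N (matrix_unit r b)"
  have "lie_bracket (matrix_unit r r) (matrix_unit r b) = matrix_unit r b"
    using False by (simp add: vec_eq_iff lie_bracket_nth)
  then have eq: "X = lie_bracket (matrix_unit r r) X"
    using leibniz[of "matrix_unit r r" "matrix_unit r b"] vanishes_diagonal_unit by (simp add: X_def)
  have off_row: "X $ p $ q = 0" if "p \<noteq> r \<or> q = r" for p q
    using arg_cong[OF eq, of "\<lambda>M. M $ p $ q"] arg_cong[OF eq, of "\<lambda>M. M $ p $ r"] that
    by (auto simp: lie_bracket_nth split: if_splits)
  have row: "(if b = q then X $ r $ b else 0) + X $ r $ q = 0" if "q \<noteq> r" for q
  proof -
    have "lie_bracket (matrix_unit q b) (matrix_unit b r) = matrix_unit q r"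
      using that by (auto simp: vec_eq_iff lie_bracket_nth)
    then have "lie_bracket (N (matrix_unit q b)) (matrix_unit b r) = 0"
      using leibniz[of "matrix_unit q b" "matrix_unit b r"] vanishes_column_unit by simp
    moreover have "N (matrix_unit q b) = - lie_bracket X (matrix_unit q r)"
      using leibniz[of "matrix_unit r b" "matrix_unit q r"] unit_bracket_image[OF that, of b]
        vanishes_column_unit by (simp add: X_def) (metis minus_minus)
    ultimately have "lie_bracket (lie_bracket X (matrix_unit q r)) (matrix_unit b r) $ b $ r = 0"
      by (simp add: lie_bracket_uminus_left)
    then show ?thesis
      using that False by (auto simp: lie_bracket_nth algebra_simps split: if_splits)
  qed
  have "X $ p $ q = 0" for p q
  proof (cases "p = r \<and> q \<noteq> r")
    case True
    have "X $ r $ b = 0" using row[of b] False by simp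
    then show ?thesis using row[of q] True by (simp split: if_splits)
  qed (use off_row in auto)
  then show ?thesis by (simp add: vec_eq_iff X_def)
qed

lemma gl_derivation_eq_0_if_column_vanishes: "N x = 0"
proof (rule gl_linear_eq_0I_matrix_unit[OF linear])
  fix a b
  show "N (matrix_unit a b) = 0"
  proof (cases "a = r")
    case True
    then show ?thesis using vanishes_row_unit by simp
  next
    case False
    then show ?thesis
      using unit_bracket_image[OF False, of b] leibniz[of "matrix_unit r b" "matrix_unit a r"]
        vanishes_column_unit vanishes_row_unit by simp
  qed
qed

end

lemma gl_derivation_inner_plus_trace:
  fixes D :: "complex^'n^'n \<Rightarrow> complex^'n^'n"
  assumes "gl_derivation D"
  shows "\<exists>A c. \<forall>x. D x = lie_bracket A x + cscale (c * trace x) (mat 1)"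
proof -
  obtain r :: 'n where True by simp
  \<comment> \<open>A is chosen so that [A, E_ar] agrees with D E_ar in column r, up to the diagonal
    entry c that the trace term absorbs.\<close>
  define c where "c = D (matrix_unit r r) $ r $ r"
  define A :: "complex^'n^'n" where
    "A = (\<chi> p a. D (matrix_unit a r) $ p $ r - (if a = r \<and> p = r then c else 0))"
  define N where "N x = D x - lie_bracket A x - cscale (c * trace x) (mat 1)" for x
  have linear: "gl_linear D" and leibniz: "\<And>x y. D (lie_bracket x y) = lie_bracket x (D y) + lie_bracket (D x) y"
    using assms by (simp_all add: gl_derivation_def)
  have "gl_linear N"
    unfolding gl_linear_def N_def
    by (simp add: gl_linear_add[OF linear] gl_linear_cscale[OF linear] lie_bracket_add_right
        lie_bracket_cscale_right trace_add trace_cscale cscale_add_left cscale_add_right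
        cscale_diff_right cscale_cscale algebra_simps)
  moreover have "N (lie_bracket x y) = lie_bracket x (N y) + lie_bracket (N x) y" for x y
    unfolding N_def
    by (simp add: leibniz lie_bracket_jacobi_right[of A x y] lie_bracket_diff_left
        lie_bracket_diff_right lie_bracket_add_left lie_bracket_add_right lie_bracket_cscale_left
        lie_bracket_cscale_right algebra_simps)
  ultimately have "gl_derivation N"
    by (simp add: gl_derivation_def)
  moreover have "N (matrix_unit a r) $ p $ r = 0" for a p
    by (simp add: N_def lie_bracket_nth A_def trace_matrix_unit c_def mat_def)
  ultimately have "N x = 0" for x
    by (rule gl_derivation_eq_0_if_column_vanishes)
  then have "D x = lie_bracket A x + cscale (c * trace x) (mat 1)" for x
    unfolding N_def by (simp add: algebra_simps)
  then show ?thesis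
    by blast
qed

context
  fixes P :: "'n::finite \<Rightarrow> 'n \<Rightarrow> complex^'n^'n" and r s :: 'n
  assumes antisym: "\<And>a b k l. lie_bracket (P a b) (matrix_unit k l) = - lie_bracket (P k l) (matrix_unit a b)"
    and distinct: "r \<noteq> s"
begin

private lemma antisym_nth:
  "(if q = l then P a b $ p $ k else 0) - (if p = k then P a b $ l $ q else 0)
    = - ((if q = b then P k l $ p $ a else 0) - (if p = a then P k l $ b $ q else 0))"
  using arg_cong[OF antisym[of a b k l], of "\<lambda>M. M $ p $ q"] by (simp add: lie_bracket_nth)

private lemma exists_other: "\<exists>l. l \<noteq> (b::'n)"
  using distinct by (cases "b = r") auto

private lemma entry_outside_row: "P a b $ p $ k = 0" if "p \<noteq> k" "p \<noteq> a"
proof -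
  obtain l where "l \<noteq> b" using exists_other by blast
  then show ?thesis using antisym_nth[where a=a and b=b and k=k and l=l and p=p and q=l] that by simp
qed

private lemma entry_in_row: "P a b $ a $ k = 0" if "k \<noteq> a" "k \<noteq> b"
proof -
  obtain l where l: "l \<noteq> b" using exists_other by blast
  then have "P k l $ b $ l = 0" using entry_outside_row[where a=k and b=l and p=b and k=l] that by simp
  then show ?thesis using antisym_nth[where a=a and b=b and k=k and l=l and p=a and q=l] that l by simp
qed

private lemma unit_entry_constant: "P a b $ a $ b = P r s $ r $ s" if "a \<noteq> b"
proof -
  have shift: "P a b $ a $ b = P b l $ b $ l" if "a \<noteq> b" "l \<noteq> b" for a b l
    using antisym_nth[where a=a and b=b and k=b and l=l and p=a and q=l] that by simp
  have to_s: "P x s $ x $ s = P r s $ r $ s" if "x \<noteq> s" for x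
    using shift[of x s r] shift[of r s r] that distinct by simp
  show ?thesis
    using to_s[of a] shift[of a b s] to_s[of b] that by (cases "b = s") auto
qed

private lemma off_diagonal_entry:
  "P a b $ p $ q = (if p = a \<and> q = b then P r s $ r $ s else 0)" if "p \<noteq> q"
  using entry_outside_row[where a=a and b=b and p=p and k=q] entry_in_row[where a=a and b=b and k=q]
    unit_entry_constant[of a b] that
  by (cases "p = a"; cases "q = b") auto

private lemma diagonal_entry_diff:
  "P a b $ k $ k - P a b $ l $ l
    = P r s $ r $ s * ((if a = k \<and> b = k then 1 else 0) - (if a = l \<and> b = l then 1 else 0))"
  if "k \<noteq> l"
proof -
  have "P a b $ k $ k - P a b $ l $ l
      = - ((if l = b then P k l $ k $ a else 0) - (if k = a then P k l $ b $ l else 0))"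
    using antisym_nth[where a=a and b=b and k=k and l=l and p=k and q=l] that by simp
  moreover have "P k l $ k $ l = P r s $ r $ s"
    using unit_entry_constant that by simp
  ultimately show ?thesis
    using off_diagonal_entry[where a=k and b=l and p=k and q=a]
      off_diagonal_entry[where a=k and b=l and p=b and q=l] that
    by (cases "k = a"; cases "l = b") (auto simp: algebra_simps)
qed

lemma antisym_on_matrix_units_imp_scalar_plus_central:
  "\<exists>tau. P a b = cscale (P r s $ r $ s) (matrix_unit a b) + cscale tau (mat 1)"
proof -
  define lam where "lam = P r s $ r $ s"
  define tau where "tau = P a b $ r $ r - lam * (if a = r \<and> b = r then 1 else 0)"
  have "P a b $ p $ q = lam * (if p = a \<and> q = b then 1 else 0) + tau * (if p = q then 1 else 0)"
    for p q
  proof (cases "p = q")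
    case False
    then show ?thesis using off_diagonal_entry by (simp add: lam_def)
  next
    case True
    then show ?thesis
      using diagonal_entry_diff[of p r a b] unfolding lam_def tau_def
      by (cases "p = r") (auto simp: algebra_simps)
  qed
  then have "P a b = cscale lam (matrix_unit a b) + cscale tau (mat 1)"
    by (simp add: vec_eq_iff mat_def)
  then show ?thesis
    unfolding lam_def by blast
qed

end

lemma commuting_map_bracket_scalar:
  fixes B :: "complex^'n^'n \<Rightarrow> complex^'n^'n"
  assumes linear: "\<And>y. gl_linear (\<lambda>x. lie_bracket (B x) y)"
    and commuting: "\<And>x. lie_bracket (B x) x = 0"
  shows "\<exists>lam. \<forall>x y. lie_bracket (B x) y = cscale lam (lie_bracket x y)"
proof (cases "\<exists>r s::'n. r \<noteq> s")
  case False
  then have "lie_bracket u v = 0" for u v :: "complex^'n^'n"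
    by (intro lie_bracket_eq_0_if_subsingleton) blast
  then show ?thesis
    by simp
next
  case True
  then obtain r s :: 'n where "r \<noteq> s"
    by blast
  have antisym: "lie_bracket (B x) y = - lie_bracket (B y) x" for x y
  proof -
    have "0 = lie_bracket (B (x + y)) (x + y)"
      using commuting by simp
    also have "\<dots> = lie_bracket (B x) x + lie_bracket (B x) y + (lie_bracket (B y) x + lie_bracket (B y) y)"
      using gl_linear_add[OF linear[of "x + y"], of x y] by (simp add: lie_bracket_add_right)
    finally show ?thesis
      using commuting[of x] commuting[of y] by (simp add: eq_neg_iff_add_eq_0)
  qed
  define lam where "lam = B (matrix_unit r s) $ r $ s"
  have "lie_bracket (B (matrix_unit a b)) y = cscale lam (lie_bracket (matrix_unit a b) y)" for a b y
  proof -
    obtain tau where "B (matrix_unit a b) = cscale lam (matrix_unit a b) + cscale tau (mat 1)"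
      using antisym_on_matrix_units_imp_scalar_plus_central[of "\<lambda>a b. B (matrix_unit a b)" r s a b]
        antisym \<open>r \<noteq> s\<close> unfolding lam_def by blast
    then show ?thesis
      by (simp add: lie_bracket_add_left lie_bracket_cscale_left)
  qed
  moreover have "gl_linear (\<lambda>x. cscale lam (lie_bracket x y))" for y
    by (simp add: gl_linear_def lie_bracket_add_left lie_bracket_cscale_left cscale_add_right
        cscale_cscale mult.commute)
  ultimately have "lie_bracket (B x) y = cscale lam (lie_bracket x y)" for x y
    using gl_linear_eqI_matrix_unit[OF linear[of y], of "\<lambda>x. cscale lam (lie_bracket x y)" x] by blast
  then show ?thesis
    by blast
qed

lemma commuting_if_inner_in_both_arguments:
  assumes "\<And>x y. lie_bracket (B x) y = lie_bracket (A y) x"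
  shows "lie_bracket (B x) x = 0"
proof -
  have "trace (lie_bracket x (B x) ** y) = 0" for y
  proof -
    have "trace (lie_bracket x (B x) ** y) = trace (lie_bracket (B x) y ** x)"
      using trace_mul_sym[of "B x ** y" x] trace_mul_sym[of "B x ** x" y]
      by (simp add: lie_bracket_def matrix_sub_rdistrib trace_sub matrix_mul_assoc)
    also have "\<dots> = trace (lie_bracket (A y) x ** x)"
      by (simp add: assms)
    also have "\<dots> = 0"
      using trace_mul_sym[of "A y ** x" x]
      by (simp add: lie_bracket_def matrix_sub_rdistrib trace_sub matrix_mul_assoc)
    finally show ?thesis .
  qed
  then have "lie_bracket x (B x) = 0"
    using trace_mul_matrix_unit by (metis vec_eq_iff zero_index)
  then show ?thesis
    using lie_bracket_antisym by (metis neg_equal_0_iff_equal)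
qed

lemma inner_trace_decompositions_agree:
  fixes A B :: "complex^'n^'n \<Rightarrow> complex^'n^'n" and c d :: "complex^'n^'n \<Rightarrow> complex"
  assumes decomp: "\<And>x y. lie_bracket (A y) x + cscale (c y * trace x) (mat 1)
    = lie_bracket (B x) y + cscale (d x * trace y) (mat 1)"
  obtains mu where "\<And>x. d x = mu * trace x" and "\<And>x y. lie_bracket (B x) y = lie_bracket (A y) x"
proof
  define n where "n = (of_nat CARD('n) :: complex)"
  have "n \<noteq> 0"
    by (simp add: n_def)
  have scalars: "c y * trace x = d x * trace y" for x y
    using arg_cong[OF decomp[where x=x and y=y], of trace] \<open>n \<noteq> 0\<close>
    by (simp add: trace_add trace_cscale trace_I flip: n_def)
  show "d x = c (mat 1) / n * trace x" for x
    using scalars[where x=x and y="mat 1"] \<open>n \<noteq> 0\<close> by (simp add: trace_I field_simps flip: n_def)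
  show "lie_bracket (B x) y = lie_bracket (A y) x" for x y
    using decomp[where x=x and y=y] by (simp add: scalars)
qed

lemma biderivation_left_gl_derivation: "biderivation f \<Longrightarrow> gl_derivation (\<lambda>x. f x z)"
  by (simp add: biderivation_def cbilinear_def gl_derivation_def gl_linear_def)

lemma biderivation_right_gl_derivation: "biderivation f \<Longrightarrow> gl_derivation (f x)"
  by (simp add: biderivation_def cbilinear_def gl_derivation_def gl_linear_def add.commute)

lemma biderivation_trace_plus_bracket:
  fixes lam mu :: complex
  shows "biderivation (\<lambda>x y :: complex^'n^'n.
    cscale (mu * trace x * trace y) (mat 1) + cscale lam (lie_bracket x y))"
  unfolding biderivation_def cbilinear_def
proof (intro conjI allI)
  fix x y z :: "complex^'n^'n" and c :: complex
  let ?f = "\<lambda>x y :: complex^'n^'n. cscale (mu * trace x * trace y) (mat 1) + cscale lam (lie_bracket x y)"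
  show "?f (x + y) z = ?f x z + ?f y z" "?f x (y + z) = ?f x y + ?f x z"
    by (simp_all add: trace_add algebra_simps cscale_add_left cscale_add_right
        lie_bracket_add_left lie_bracket_add_right)
  show "?f (cscale c x) y = cscale c (?f x y)" "?f x (cscale c y) = cscale c (?f x y)"
    by (simp_all add: trace_cscale cscale_add_right cscale_cscale lie_bracket_cscale_left
        lie_bracket_cscale_right mult_ac)
  show "?f (lie_bracket x y) z = lie_bracket x (?f y z) + lie_bracket (?f x z) y"
    by (simp add: lie_bracket_add_left lie_bracket_add_right lie_bracket_cscale_left
        lie_bracket_cscale_right cscale_add_right lie_bracket_jacobi_left[of x y z])
  show "?f x (lie_bracket y z) = lie_bracket (?f x y) z + lie_bracket y (?f x z)"
    by (simp add: lie_bracket_add_left lie_bracket_add_right lie_bracket_cscale_left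
        lie_bracket_cscale_right cscale_add_right lie_bracket_jacobi_right[of x y z] add.commute)
qed

lemma biderivation_imp_trace_plus_bracket:
  assumes "biderivation f"
  shows "\<exists>lam mu :: complex. \<forall>x y.
    f x y = cscale (mu * trace x * trace y) (mat 1) + cscale lam (lie_bracket x y)"
proof -
  obtain A c where left: "\<And>x y. f x y = lie_bracket (A y) x + cscale (c y * trace x) (mat 1)"
    using gl_derivation_inner_plus_trace[OF biderivation_left_gl_derivation[OF assms]] by metis
  obtain B d where right: "\<And>x y. f x y = lie_bracket (B x) y + cscale (d x * trace y) (mat 1)"
    using gl_derivation_inner_plus_trace[OF biderivation_right_gl_derivation[OF assms]] by metis
  obtain mu where d: "\<And>x. d x = mu * trace x" and AB: "\<And>x y. lie_bracket (B x) y = lie_bracket (A y) x"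
    using inner_trace_decompositions_agree[of A c B d] left right by metis
  have linear: "gl_linear (\<lambda>x. lie_bracket (B x) y)" for y
  proof -
    have "lie_bracket (B x) y = f x y - cscale (mu * trace y * trace x) (mat 1)" for x
      using right[of x y] d[of x] by (simp add: mult_ac)
    moreover have "gl_linear (\<lambda>x. f x y)"
      using biderivation_left_gl_derivation[OF assms] by (simp add: gl_derivation_def)
    ultimately show ?thesis
      by (simp add: gl_linear_def trace_add trace_cscale distrib_left cscale_add_left
          cscale_diff_right cscale_cscale mult_ac)
  qed
  obtain lam where lam: "\<And>x y. lie_bracket (B x) y = cscale lam (lie_bracket x y)"
    using commuting_map_bracket_scalar[OF linear commuting_if_inner_in_both_arguments[OF AB]] by blast
  have "f x y = cscale (mu * trace x * trace y) (mat 1) + cscale lam (lie_bracket x y)" for x y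
    using right[of x y] lam[of x y] by (simp add: d add.commute)
  then show ?thesis
    by blast
qed

theorem theorem3p2:
  fixes f :: "complex^'n^'n \<Rightarrow> complex^'n^'n \<Rightarrow> complex^'n^'n"
  shows "biderivation f \<longleftrightarrow>
    (\<exists>lam mu :: complex. \<forall>x y.
       f x y = cscale (mu * trace x * trace y) (mat 1) + cscale lam (lie_bracket x y))"
proof
  assume "biderivation f"
  then show "\<exists>lam mu :: complex. \<forall>x y.
      f x y = cscale (mu * trace x * trace y) (mat 1) + cscale lam (lie_bracket x y)"
    by (rule biderivation_imp_trace_plus_bracket)
next
  assume "\<exists>lam mu :: complex. \<forall>x y.
      f x y = cscale (mu * trace x * trace y) (mat 1) + cscale lam (lie_bracket x y)"
  then obtain lam mu :: complex
    where "f = (\<lambda>x y. cscale (mu * trace x * trace y) (mat 1) + cscale lam (lie_bracket x y))"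
    by blast
  then show "biderivation f"
    using biderivation_trace_plus_bracket by simp
qed

end
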